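(* Let $P_0,P_1,P_2\in\mathbb H$ be distinct, let $\varepsilon\in\{-1,1\}$, and for $i\in\mathbb Z/3\mathbb Z$ let $$R_i:=\frac{\sqrt{1-2\langle P_{i+1},P_{i+2}\rangle}(P_{i+1}+P_{i+2})+\varepsilon P_{i+1}\tilde\times P_{i+2}}{\sqrt3(1-\langle P_{i+1},P_{i+2}\rangle)}.$$ Let $\alpha:=-1+\langle P_0,P_1\rangle+\langle P_1,P_2\rangle+\langle P_2,P_0\rangle$, $\chi:=\langle P_0\tilde\times P_1,P_2\rangle$, $d_i:=\sqrt{1-2\langle P_{i+1},P_{i+2}\rangle}$ and $\gamma:=3(d_0^2+1)(d_1^2+1)(d_2^2+1)$. Then for every $i\in\mathbb Z/3\mathbb Z$, $$\gamma\langle R_{i+1},R_{i+2}\rangle=(d_i^2+1)\Bigl(4\bigl(\alpha d_{i+1}d_{i+2}+\varepsilon\chi(d_{i+1}+d_{i+2})\bigr)-(d_{i+1}^2-1)(d_{i+2}^2-1)+2(d_i^2-1)\Bigr)$$ and $$\gamma\bigl(\langle R_{i+2},R_i\rangle-\langle R_i,R_{i+1}\rangle\bigr)=4(d_{i+2}-d_{i+1})\Bigl(\alpha(d_0+d_1+d_2-d_0d_1d_2)+\varepsilon\chi(1-d_0d_1-d_1d_2-d_2d_0)\Bigr).$$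
   Context: $\langle v,w\rangle=-v_1w_1+v_2w_2+v_3w_3$ on $\mathbb R^3$; $\mathbb H=\{P\in\mathbb R^3:\langle P,P\rangle=-1,\ P_1\ge1\}$; $v\tilde\times w:=J(v\times w)$ with $J=\mathrm{diag}(-1,1,1)$ and $\times$ the Euclidean cross product. $R_i$ is the centroid of the equilateral triangle erected (on the side determined by $\varepsilon$) on the side $P_{i+1}P_{i+2}$, i.e. the vertices of the Napoleonization of $P_0P_1P_2$. *)

theory Defs
  imports "HOL-Analysis.Analysis" "HOL-Analysis.Cross3"
begin

definition mink :: "real^3 \<Rightarrow> real^3 \<Rightarrow> real" where
  "mink v w = - (v$1 * w$1) + v$2 * w$2 + v$3 * w$3"

text \<open>Hyperboloid model of the hyperbolic plane.\<close>
definition hyp :: "(real^3) set" where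
  "hyp = {P. mink P P = -1 \<and> P$1 \<ge> 1}"

definition lcross :: "real^3 \<Rightarrow> real^3 \<Rightarrow> real^3" where
  "lcross v w = (\<chi> k. (if k = 1 then -1 else 1) * (cross3 v w) $ k)"

text \<open>Indices in Z/3Z are represented by naturals taken mod 3.\<close>
definition napR :: "real \<Rightarrow> (nat \<Rightarrow> real^3) \<Rightarrow> nat \<Rightarrow> real^3" where
  "napR eps P i =
     (let A = P ((i + 1) mod 3); B = P ((i + 2) mod 3) in
       (1 / (sqrt 3 * (1 - mink A B))) *\<^sub>R
         (sqrt (1 - 2 * mink A B) *\<^sub>R (A + B) + eps *\<^sub>R lcross A B))"

definition napd :: "(nat \<Rightarrow> real^3) \<Rightarrow> nat \<Rightarrow> real" where
  "napd P i = sqrt (1 - 2 * mink (P ((i + 1) mod 3)) (P ((i + 2) mod 3)))"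

end

theory Submission
  imports Defs
begin

text \<open>
  Up to the factor 1 / (sqrt 3 (1 - <P,Q>)), the vertex erected on PQ is
  sqrt (1 - 2<P,Q>) (P + Q) + eps lcross P Q. Expanding the Minkowski product of two such
  vertices bilinearly, the Lorentzian Lagrange identity
  <a \<times> b, c \<times> d> = <a,d><b,c> - <a,c><b,d>, the cyclic symmetry of the triple product
  chi and <P,P> = -1 reduce everything to the pairings <P_j,P_k>. By the reverse
  Cauchy--Schwarz inequality these are at most -1 on the hyperboloid, so the square roots
  are real and <P_j,P_k> = (1 - d^2)/2, which makes the first identity polynomial. The second
  is the difference of two rotated instances of the first, using
  alpha = (1 - d_0^2 - d_1^2 - d_2^2)/2.
\<close>

lemma mink_sym: "mink v w = mink w v"
  unfolding mink_def by (simp add: algebra_simps)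

lemma mink_add_left: "mink (u + v) w = mink u w + mink v w"
  and mink_add_right: "mink u (v + w) = mink u v + mink u w"
  and mink_scaleR_left: "mink (a *\<^sub>R v) w = a * mink v w"
  and mink_scaleR_right: "mink v (a *\<^sub>R w) = a * mink v w"
  unfolding mink_def by (simp_all add: algebra_simps)

lemma lcross_components:
  "lcross u v = vector [-(u$2 * v$3 - u$3 * v$2), u$3 * v$1 - u$1 * v$3, u$1 * v$2 - u$2 * v$1]"
  unfolding lcross_def cross3_def by (simp add: vec_eq_iff forall_3)

lemma mink_lcross_left_self: "mink (lcross u v) u = 0"
  and mink_lcross_right_self: "mink (lcross u v) v = 0"
  unfolding mink_def lcross_components by (simp_all add: algebra_simps)

lemma mink_lcross_cyclic: "mink (lcross u v) w = mink (lcross v w) u"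
  unfolding mink_def lcross_components by (simp add: algebra_simps)

lemma mink_lcross_lcross:
  "mink (lcross u v) (lcross w z) = mink u z * mink v w - mink u w * mink v z"
  unfolding mink_def lcross_components by (simp add: algebra_simps)

lemma mink_linear_combinations:
  "mink (a *\<^sub>R u + b *\<^sub>R v) (c *\<^sub>R w + d *\<^sub>R z)
    = a * c * mink u w + a * d * mink u z + b * c * mink v w + b * d * mink v z"
  unfolding mink_def by (simp add: algebra_simps)

lemma mink_napoleon_numerators:
  assumes "mink A A = -1"
  shows "mink (y *\<^sub>R (C + A) + e *\<^sub>R lcross C A) (x *\<^sub>R (A + B) + e *\<^sub>R lcross A B)
    = y * x * (mink A B + mink B C + mink C A - 1) + e * (y + x) * mink (lcross A B) C
      - e\<^sup>2 * (mink C A * mink A B + mink B C)"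
proof -
  have sums: "mink (C + A) (A + B) = mink A B + mink B C + mink C A - 1"
    using assms by (simp add: mink_add_left mink_add_right mink_sym[of C B])
  have sum_cross: "mink (C + A) (lcross A B) = mink (lcross A B) C"
    by (simp add: mink_sym[of "C + A"] mink_add_right mink_lcross_left_self)
  have cross_sum: "mink (lcross C A) (A + B) = mink (lcross A B) C"
    by (simp add: mink_add_right mink_lcross_right_self mink_lcross_cyclic[of C A B])
  have crosses: "mink (lcross C A) (lcross A B) = - (mink C A * mink A B + mink B C)"
    using assms by (simp add: mink_lcross_lcross mink_sym[of C B])
  show ?thesis
    unfolding mink_linear_combinations sums sum_cross cross_sum crosses
    by (simp add: power2_eq_square algebra_simps)
qed

lemma hyp_mink_self: "P \<in> hyp \<Longrightarrow> mink P P = -1"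
  unfolding hyp_def by simp

lemma hyp_mink_le:
  assumes "P \<in> hyp" "Q \<in> hyp"
  shows "mink P Q \<le> -1"
proof -
  let ?x = "P$1" and ?y = "P$2" and ?z = "P$3" and ?a = "Q$1" and ?b = "Q$2" and ?c = "Q$3"
  have P: "?x\<^sup>2 = 1 + ?y\<^sup>2 + ?z\<^sup>2" "?x \<ge> 1"
    and Q: "?a\<^sup>2 = 1 + ?b\<^sup>2 + ?c\<^sup>2" "?a \<ge> 1"
    using assms unfolding hyp_def mink_def by (auto simp: power2_eq_square)
  have "(?x * ?a)\<^sup>2 - (1 + ?y * ?b + ?z * ?c)\<^sup>2
      = (?y - ?b)\<^sup>2 + (?z - ?c)\<^sup>2 + (?y * ?c - ?z * ?b)\<^sup>2"
    unfolding power_mult_distrib P(1) Q(1) by (simp add: power2_eq_square algebra_simps)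
  then have "(1 + ?y * ?b + ?z * ?c)\<^sup>2 \<le> (?x * ?a)\<^sup>2"
    by (metis add_nonneg_nonneg diff_ge_0_iff_ge zero_le_power2)
  then have "\<bar>1 + ?y * ?b + ?z * ?c\<bar> \<le> ?x * ?a"
    using P(2) Q(2) by (simp flip: abs_le_square_iff)
  then show ?thesis
    unfolding mink_def by linarith
qed

definition napoleon_vertex :: "real \<Rightarrow> real^3 \<Rightarrow> real^3 \<Rightarrow> real^3" where
  "napoleon_vertex eps X Y = (1 / (sqrt 3 * (1 - mink X Y))) *\<^sub>R
     (sqrt (1 - 2 * mink X Y) *\<^sub>R (X + Y) + eps *\<^sub>R lcross X Y)"

lemma napR_eq_napoleon_vertex:
  "napR eps P i = napoleon_vertex eps (P ((i + 1) mod 3)) (P ((i + 2) mod 3))"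
  unfolding napR_def napoleon_vertex_def Let_def ..

lemma mink_napoleon_vertices:
  assumes "A \<in> hyp" "B \<in> hyp" "C \<in> hyp" and "eps\<^sup>2 = 1"
  defines "dA \<equiv> sqrt (1 - 2 * mink B C)" and "dB \<equiv> sqrt (1 - 2 * mink C A)"
    and "dC \<equiv> sqrt (1 - 2 * mink A B)"
  shows "3 * (dA\<^sup>2 + 1) * (dB\<^sup>2 + 1) * (dC\<^sup>2 + 1)
      * mink (napoleon_vertex eps C A) (napoleon_vertex eps A B)
    = (dA\<^sup>2 + 1) * (4 * ((-1 + mink A B + mink B C + mink C A) * dB * dC
        + eps * mink (lcross A B) C * (dB + dC)) - (dB\<^sup>2 - 1) * (dC\<^sup>2 - 1) + 2 * (dA\<^sup>2 - 1))"
proof -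
  define a b c chi where "a = mink A B" and "b = mink B C" and "c = mink C A"
    and "chi = mink (lcross A B) C"
  define N where "N = dB * dC * (a + b + c - 1) + eps * (dB + dC) * chi - (c * a + b)"
  have "a \<le> -1" "b \<le> -1" "c \<le> -1"
    unfolding a_def b_def c_def using assms(1-3) hyp_mink_le by blast+
  then have squares: "dA\<^sup>2 = 1 - 2 * b" "dB\<^sup>2 = 1 - 2 * c" "dC\<^sup>2 = 1 - 2 * a"
    and nonzero: "3 * (1 - c) * (1 - a) \<noteq> 0"
    unfolding dA_def dB_def dC_def b_def c_def a_def by simp_all
  have "mink (napoleon_vertex eps C A) (napoleon_vertex eps A B) = N / (3 * (1 - c) * (1 - a))"
    unfolding napoleon_vertex_def mink_scaleR_left mink_scaleR_right
      dB_def[symmetric] dC_def[symmetric] mink_napoleon_numerators[OF hyp_mink_self[OF assms(1)]]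
      assms(4) N_def a_def b_def c_def chi_def
    by (simp add: mult.assoc[symmetric])
  moreover have "3 * (dA\<^sup>2 + 1) * (dB\<^sup>2 + 1) * (dC\<^sup>2 + 1)
      = 4 * (dA\<^sup>2 + 1) * (3 * (1 - c) * (1 - a))"
    unfolding squares by (simp add: algebra_simps)
  ultimately have "3 * (dA\<^sup>2 + 1) * (dB\<^sup>2 + 1) * (dC\<^sup>2 + 1)
      * mink (napoleon_vertex eps C A) (napoleon_vertex eps A B)
      = 4 * (dA\<^sup>2 + 1) * N"
    using nonzero by simp
  also have "\<dots> = (dA\<^sup>2 + 1) * (4 * ((-1 + a + b + c) * dB * dC + eps * chi * (dB + dC))
      - (dB\<^sup>2 - 1) * (dC\<^sup>2 - 1) + 2 * (dA\<^sup>2 - 1))"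
    unfolding N_def squares by (simp add: algebra_simps)
  finally show ?thesis
    unfolding a_def b_def c_def chi_def .
qed

lemma napoleon_difference_identity:
  fixes x y z alpha e chi :: real
  assumes "alpha = (1 - x\<^sup>2 - y\<^sup>2 - z\<^sup>2) / 2"
  shows "(y\<^sup>2 + 1) * (4 * (alpha * z * x + e * chi * (z + x))
          - (z\<^sup>2 - 1) * (x\<^sup>2 - 1) + 2 * (y\<^sup>2 - 1))
       - (z\<^sup>2 + 1) * (4 * (alpha * x * y + e * chi * (x + y))
          - (x\<^sup>2 - 1) * (y\<^sup>2 - 1) + 2 * (z\<^sup>2 - 1))
     = 4 * (z - y) * (alpha * (x + y + z - x * y * z) + e * chi * (1 - x * y - y * z - z * x))"
  unfolding assms by (simp add: field_simps) algebra

lemma napoleon_identities: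
  assumes "A \<in> hyp" "B \<in> hyp" "C \<in> hyp" and "eps\<^sup>2 = 1"
  defines "alpha \<equiv> -1 + mink A B + mink B C + mink C A" and "chi \<equiv> mink (lcross A B) C"
    and "dA \<equiv> sqrt (1 - 2 * mink B C)" and "dB \<equiv> sqrt (1 - 2 * mink C A)"
    and "dC \<equiv> sqrt (1 - 2 * mink A B)"
  shows "3 * (dA\<^sup>2 + 1) * (dB\<^sup>2 + 1) * (dC\<^sup>2 + 1)
      * mink (napoleon_vertex eps C A) (napoleon_vertex eps A B)
      = (dA\<^sup>2 + 1) * (4 * (alpha * dB * dC + eps * chi * (dB + dC))
          - (dB\<^sup>2 - 1) * (dC\<^sup>2 - 1) + 2 * (dA\<^sup>2 - 1))"
    and "3 * (dA\<^sup>2 + 1) * (dB\<^sup>2 + 1) * (dC\<^sup>2 + 1)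
      * (mink (napoleon_vertex eps A B) (napoleon_vertex eps B C)
         - mink (napoleon_vertex eps B C) (napoleon_vertex eps C A))
      = 4 * (dC - dB) * (alpha * (dA + dB + dC - dA * dB * dC)
          + eps * chi * (1 - dA * dB - dB * dC - dC * dA))"
proof -
  have alpha_rotations:
    "-1 + mink B C + mink C A + mink A B = alpha" "-1 + mink C A + mink A B + mink B C = alpha"
    unfolding alpha_def by simp_all
  have chi_rotations: "mink (lcross B C) A = chi" "mink (lcross C A) B = chi"
    unfolding chi_def by (metis mink_lcross_cyclic)+
  have gamma_rotations:
    "3 * (dB\<^sup>2 + 1) * (dC\<^sup>2 + 1) * (dA\<^sup>2 + 1) = 3 * (dA\<^sup>2 + 1) * (dB\<^sup>2 + 1) * (dC\<^sup>2 + 1)"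
    "3 * (dC\<^sup>2 + 1) * (dA\<^sup>2 + 1) * (dB\<^sup>2 + 1) = 3 * (dA\<^sup>2 + 1) * (dB\<^sup>2 + 1) * (dC\<^sup>2 + 1)"
    by (simp_all only: mult_ac)
  show "3 * (dA\<^sup>2 + 1) * (dB\<^sup>2 + 1) * (dC\<^sup>2 + 1)
      * mink (napoleon_vertex eps C A) (napoleon_vertex eps A B)
      = (dA\<^sup>2 + 1) * (4 * (alpha * dB * dC + eps * chi * (dB + dC))
          - (dB\<^sup>2 - 1) * (dC\<^sup>2 - 1) + 2 * (dA\<^sup>2 - 1))"
    using mink_napoleon_vertices[OF assms(1-4)] unfolding alpha_def chi_def dA_def dB_def dC_def .
  have second: "3 * (dA\<^sup>2 + 1) * (dB\<^sup>2 + 1) * (dC\<^sup>2 + 1)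
      * mink (napoleon_vertex eps A B) (napoleon_vertex eps B C)
      = (dB\<^sup>2 + 1) * (4 * (alpha * dC * dA + eps * chi * (dC + dA))
          - (dC\<^sup>2 - 1) * (dA\<^sup>2 - 1) + 2 * (dB\<^sup>2 - 1))"
    using mink_napoleon_vertices[OF assms(2,3,1,4)]
    unfolding alpha_rotations chi_rotations gamma_rotations
      dA_def[symmetric] dB_def[symmetric] dC_def[symmetric] .
  have third: "3 * (dA\<^sup>2 + 1) * (dB\<^sup>2 + 1) * (dC\<^sup>2 + 1)
      * mink (napoleon_vertex eps B C) (napoleon_vertex eps C A)
      = (dC\<^sup>2 + 1) * (4 * (alpha * dA * dB + eps * chi * (dA + dB))
          - (dA\<^sup>2 - 1) * (dB\<^sup>2 - 1) + 2 * (dC\<^sup>2 - 1))"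
    using mink_napoleon_vertices[OF assms(3,1,2,4)]
    unfolding alpha_rotations chi_rotations gamma_rotations
      dA_def[symmetric] dB_def[symmetric] dC_def[symmetric] .
  have "mink A B \<le> -1" "mink B C \<le> -1" "mink C A \<le> -1"
    using assms(1-3) hyp_mink_le by blast+
  then have "alpha = (1 - dA\<^sup>2 - dB\<^sup>2 - dC\<^sup>2) / 2"
    unfolding alpha_def dA_def dB_def dC_def by simp
  moreover have "3 * (dA\<^sup>2 + 1) * (dB\<^sup>2 + 1) * (dC\<^sup>2 + 1)
      * (mink (napoleon_vertex eps A B) (napoleon_vertex eps B C)
         - mink (napoleon_vertex eps B C) (napoleon_vertex eps C A))
      = (dB\<^sup>2 + 1) * (4 * (alpha * dC * dA + eps * chi * (dC + dA))
          - (dC\<^sup>2 - 1) * (dA\<^sup>2 - 1) + 2 * (dB\<^sup>2 - 1))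
        - (dC\<^sup>2 + 1) * (4 * (alpha * dA * dB + eps * chi * (dA + dB))
          - (dA\<^sup>2 - 1) * (dB\<^sup>2 - 1) + 2 * (dC\<^sup>2 - 1))"
    unfolding second[symmetric] third[symmetric] by (rule right_diff_distrib)
  ultimately show "3 * (dA\<^sup>2 + 1) * (dB\<^sup>2 + 1) * (dC\<^sup>2 + 1)
      * (mink (napoleon_vertex eps A B) (napoleon_vertex eps B C)
         - mink (napoleon_vertex eps B C) (napoleon_vertex eps C A))
      = 4 * (dC - dB) * (alpha * (dA + dB + dC - dA * dB * dC)
          + eps * chi * (1 - dA * dB - dB * dC - dC * dA))"
    using napoleon_difference_identity by simp
qed

theorem lemma4p1:
  fixes P :: "nat \<Rightarrow> real^3" and eps :: real and i :: nat
  assumes hP: "\<And>j. j < 3 \<Longrightarrow> P j \<in> hyp"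
    and dist: "P 0 \<noteq> P 1" "P 1 \<noteq> P 2" "P 2 \<noteq> P 0"
    and eps: "eps \<in> {-1, 1}"
    and i: "i < 3"
  shows
    "let alpha = -1 + mink (P 0) (P 1) + mink (P 1) (P 2) + mink (P 2) (P 0);
         chi = mink (lcross (P 0) (P 1)) (P 2);
         d = napd P; R = napR eps P;
         gam = 3 * ((d 0)^2 + 1) * ((d 1)^2 + 1) * ((d 2)^2 + 1);
         i1 = (i + 1) mod 3; i2 = (i + 2) mod 3
     in gam * mink (R i1) (R i2) =
          ((d i)^2 + 1) * (4 * (alpha * d i1 * d i2 + eps * chi * (d i1 + d i2))
            - ((d i1)^2 - 1) * ((d i2)^2 - 1) + 2 * ((d i)^2 - 1))
      \<and> gam * (mink (R i2) (R i) - mink (R i) (R i1)) =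
          4 * (d i2 - d i1) * (alpha * (d 0 + d 1 + d 2 - d 0 * d 1 * d 2)
            + eps * chi * (1 - d 0 * d 1 - d 1 * d 2 - d 2 * d 0))"
proof -
  have eps2: "eps\<^sup>2 = 1"
    using eps by auto
  have P: "P 0 \<in> hyp" "P 1 \<in> hyp" "P 2 \<in> hyp"
    using hP by simp_all
  have mods: "(0 + 1) mod 3 = (1::nat)" "(0 + 2) mod 3 = (2::nat)" "(1 + 1) mod 3 = (2::nat)"
    "(1 + 2) mod 3 = (0::nat)" "(2 + 1) mod 3 = (0::nat)" "(2 + 2) mod 3 = (1::nat)"
    by simp_all
  consider "i = 0" | "i = 1" | "i = 2"
    using i by linarith
  then show ?thesis
  proof cases
    case 1
    show ?thesis
      using napoleon_identities[OF P(1-3) eps2]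
      unfolding Let_def 1 napR_eq_napoleon_vertex napd_def mods by simp
  next
    case 2
    show ?thesis
      using napoleon_identities[OF P(2,3,1) eps2]
      unfolding Let_def 2 napR_eq_napoleon_vertex napd_def mods
      by (simp only: mink_lcross_cyclic[of "P 0"] diff_diff_eq ac_simps)
  next
    case 3
    show ?thesis
      using napoleon_identities[OF P(3,1,2) eps2]
      unfolding Let_def 3 napR_eq_napoleon_vertex napd_def mods
      by (simp only: mink_lcross_cyclic[of "P 2", symmetric] diff_diff_eq ac_simps)
  qed
qed

end
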